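(* Let $n_1,n_2\ge1$, $n=n_1n_2$, and let $R=(r_{i,j})_{i,j=0}^{n-1}$ be a Hermitian positive definite block Toeplitz matrix with $n_2\times n_2$ blocks of size $n_1\times n_1$ (i.e. $R=(R_{b-a})_{a,b=0}^{n_2-1}$, $R_m\in\mathbb{C}^{n_1\times n_1}$, $R_{-m}=R_m^H$). There is an algorithm that evaluates the generalized reflection coefficient recurrences for $R$, computing $a_{k,l},a'_{k,l},p_{k,l},q_{k,l},v_{k,l},v'_{k,l}$ for all pairs $(k,l)$ with $0\le k\le n_1-1$ and $k\le l\le n-1$ (obtaining the quantities with $k\ge n_1$ that the recurrence needs through the identities $q_{k,l}=U^{k\,\mathrm{sec}\,n_1}q_{k\bmod n_1,\,l-k\,\mathrm{sec}\,n_1}$, $v_{k,l}=v_{k\bmod n_1,\,l-k\,\mathrm{sec}\,n_1}$), using $O(n_1^3n_2^2)$ arithmetic operations.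
   Context: For integers $a\ge0$, $b>0$: $a\bmod b$ is the remainder of division of $a$ by $b$ and $a\,\mathrm{sec}\,b:=b\lfloor a/b\rfloor$. $U$ is the $n\times n$ shift matrix with $U_{i+1,i}=1$ ($0\le i\le n-2$), zeros elsewhere, $U^0=I$. Let $e_0,\dots,e_{n-1}$ be the canonical basis column vectors of $\mathbb{C}^n$. Generalized reflection coefficients of $R$: $p_{k,k}=q_{k,k}=e_k$; $v_{k,l}:=q_{k,l}^TRe_l$, $v'_{k,l}:=p_{k,l}^TRe_k$ (positive reals); and for $0\le k<l\le n-1$, recursively in $l-k$: $a_{k,l}=\dfrac{p_{k,l-1}^TRe_l}{v_{k+1,l}}$, $a'_{k,l}=\dfrac{q_{k+1,l}^TRe_k}{v'_{k,l-1}}$, $p_{k,l}=p_{k,l-1}-a_{k,l}q_{k+1,l}$, $q_{k,l}=q_{k+1,l}-a'_{k,l}p_{k,l-1}$, $v_{k,l}=v_{k+1,l}(1-a_{k,l}a'_{k,l})$, $v'_{k,l}=v'_{k,l-1}(1-a_{k,l}a'_{k,l})$. The vector $p_{k,l}$ (resp. $q_{k,l}$) has nonzero entries only in positions $k,\dots,l$. *)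

theory Defs
  imports Complex_Main
begin

text \<open>An n x n complex matrix is a function nat => nat => complex (only indices < n matter);
 a vector of C^n is a function nat => complex (only indices < n matter).\<close>

definition evec :: "nat \<Rightarrow> nat \<Rightarrow> complex" where
  "evec k = (\<lambda>i. if i = k then 1 else 0)"

definition bil :: "nat \<Rightarrow> (nat \<Rightarrow> nat \<Rightarrow> complex) \<Rightarrow> (nat \<Rightarrow> complex) \<Rightarrow> nat \<Rightarrow> complex" where
  "bil n R x j = (\<Sum>i<n. x i * R i j)"

text \<open>(U^s x), U the n x n shift matrix with U_{i+1,i} = 1\<close>
definition shiftU :: "nat \<Rightarrow> nat \<Rightarrow> (nat \<Rightarrow> complex) \<Rightarrow> nat \<Rightarrow> complex" where
  "shiftU n s x = (\<lambda>i. if s \<le> i \<and> i < n then x (i - s) else 0)"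

definition sec :: "nat \<Rightarrow> nat \<Rightarrow> nat" where
  "sec a b = b * (a div b)"

definition hermitian_mat :: "nat \<Rightarrow> (nat \<Rightarrow> nat \<Rightarrow> complex) \<Rightarrow> bool" where
  "hermitian_mat n R \<longleftrightarrow> (\<forall>i<n. \<forall>j<n. R j i = cnj (R i j))"

definition posdef_mat :: "nat \<Rightarrow> (nat \<Rightarrow> nat \<Rightarrow> complex) \<Rightarrow> bool" where
  "posdef_mat n R \<longleftrightarrow> hermitian_mat n R \<and>
     (\<forall>x::nat \<Rightarrow> complex. (\<exists>i<n. x i \<noteq> 0) \<longrightarrow>
        0 < Re (\<Sum>i<n. \<Sum>j<n. cnj (x i) * R i j * x j))"

definition block_toeplitz :: "nat \<Rightarrow> nat \<Rightarrow> (nat \<Rightarrow> nat \<Rightarrow> complex) \<Rightarrow> bool" where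
  "block_toeplitz n1 n2 R \<longleftrightarrow>
     (\<exists>B :: int \<Rightarrow> nat \<Rightarrow> nat \<Rightarrow> complex.
        (\<forall>m i j. i < n1 \<longrightarrow> j < n1 \<longrightarrow> B (- m) i j = cnj (B m j i)) \<and>
        (\<forall>a<n2. \<forall>b<n2. \<forall>i<n1. \<forall>j<n1.
            R (a * n1 + i) (b * n1 + j) = B (int b - int a) i j))"

text \<open>pq n R k d = (p_{k,k+d}, q_{k,k+d}), by recursion on d = l - k.\<close>
fun pq :: "nat \<Rightarrow> (nat \<Rightarrow> nat \<Rightarrow> complex) \<Rightarrow> nat \<Rightarrow> nat
           \<Rightarrow> (nat \<Rightarrow> complex) \<times> (nat \<Rightarrow> complex)" where
  "pq n R k 0 = (evec k, evec k)"
| "pq n R k (Suc d) =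
     (let l = k + Suc d;
          p' = fst (pq n R k d);           \<comment> \<open>p_{k,l-1}\<close>
          q' = snd (pq n R (Suc k) d);     \<comment> \<open>q_{k+1,l}\<close>
          a = bil n R p' l / bil n R q' l;  \<comment> \<open>a_{k,l} = p_{k,l-1}^T R e_l / v_{k+1,l}\<close>
          a' = bil n R q' k / bil n R p' k  \<comment> \<open>a'_{k,l} = q_{k+1,l}^T R e_k / v'_{k,l-1}\<close>
      in ((\<lambda>i. p' i - a * q' i), (\<lambda>i. q' i - a' * p' i)))"

definition pvec :: "nat \<Rightarrow> (nat \<Rightarrow> nat \<Rightarrow> complex) \<Rightarrow> nat \<Rightarrow> nat \<Rightarrow> nat \<Rightarrow> complex" where
  "pvec n R k l = fst (pq n R k (l - k))"

definition qvec :: "nat \<Rightarrow> (nat \<Rightarrow> nat \<Rightarrow> complex) \<Rightarrow> nat \<Rightarrow> nat \<Rightarrow> nat \<Rightarrow> complex" where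
  "qvec n R k l = snd (pq n R k (l - k))"

definition vcoef :: "nat \<Rightarrow> (nat \<Rightarrow> nat \<Rightarrow> complex) \<Rightarrow> nat \<Rightarrow> nat \<Rightarrow> complex" where
  "vcoef n R k l = bil n R (qvec n R k l) l"

definition vcoef' :: "nat \<Rightarrow> (nat \<Rightarrow> nat \<Rightarrow> complex) \<Rightarrow> nat \<Rightarrow> nat \<Rightarrow> complex" where
  "vcoef' n R k l = bil n R (pvec n R k l) k"

text \<open>for k < l\<close>
definition acoef :: "nat \<Rightarrow> (nat \<Rightarrow> nat \<Rightarrow> complex) \<Rightarrow> nat \<Rightarrow> nat \<Rightarrow> complex" where
  "acoef n R k l = bil n R (pvec n R k (l - 1)) l / vcoef n R (Suc k) l"

definition acoef' :: "nat \<Rightarrow> (nat \<Rightarrow> nat \<Rightarrow> complex) \<Rightarrow> nat \<Rightarrow> nat \<Rightarrow> complex" where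
  "acoef' n R k l = bil n R (qvec n R (Suc k) l) k / vcoef' n R k (l - 1)"

text \<open>Registers initially hold the input; each instruction appends one new register
  and costs one arithmetic operation.\<close>
datatype instr = Add nat nat | Sub nat nat | Mul nat nat | Dvd nat nat | Conj nat | Const complex

definition reg :: "complex list \<Rightarrow> nat \<Rightarrow> complex" where
  "reg m i = (if i < length m then m ! i else 0)"

fun step :: "instr \<Rightarrow> complex list \<Rightarrow> complex" where
  "step (Add i j) m = reg m i + reg m j"
| "step (Sub i j) m = reg m i - reg m j"
| "step (Mul i j) m = reg m i * reg m j"
| "step (Dvd i j) m = reg m i / reg m j"
| "step (Conj i) m = cnj (reg m i)"
| "step (Const c) m = c"

fun exec :: "instr list \<Rightarrow> complex list \<Rightarrow> complex list" where
  "exec [] m = m"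
| "exec (ins # P) m = exec P (m @ [step ins m])"

definition input_of :: "nat \<Rightarrow> (nat \<Rightarrow> nat \<Rightarrow> complex) \<Rightarrow> complex list" where
  "input_of n R = concat (map (\<lambda>i. map (\<lambda>j. R i j) [0..<n]) [0..<n])"

datatype quantity = QA nat nat | QA' nat nat | QV nat nat | QV' nat nat
  | QP nat nat nat | QQ nat nat nat

fun qval :: "nat \<Rightarrow> (nat \<Rightarrow> nat \<Rightarrow> complex) \<Rightarrow> quantity \<Rightarrow> complex" where
  "qval n R (QA k l) = acoef n R k l"
| "qval n R (QA' k l) = acoef' n R k l"
| "qval n R (QV k l) = vcoef n R k l"
| "qval n R (QV' k l) = vcoef' n R k l"
| "qval n R (QP k l i) = pvec n R k l i"
| "qval n R (QQ k l i) = qvec n R k l i"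

definition required :: "nat \<Rightarrow> nat \<Rightarrow> quantity set" where
  "required n1 n =
     {QA k l | k l. k < n1 \<and> k < l \<and> l < n} \<union> {QA' k l | k l. k < n1 \<and> k < l \<and> l < n} \<union>
     {QV k l | k l. k < n1 \<and> k \<le> l \<and> l < n} \<union> {QV' k l | k l. k < n1 \<and> k \<le> l \<and> l < n} \<union>
     {QP k l i | k l i. k < n1 \<and> k \<le> l \<and> l < n \<and> i < n} \<union>
     {QQ k l i | k l i. k < n1 \<and> k \<le> l \<and> l < n \<and> i < n}"

end

theory Submission
  imports Defs
begin

(* A block Toeplitz matrix is invariant under shifting rows and columns simultaneously by a
   multiple s of n1, and the recurrences see R only through the bilinear forms x^T R e_j;
   hence starting them at k + s instead of k just shifts every vector by U^s.

   For the algorithm, each required quantity is an arithmetic expression in earlier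
   quantities and the entries of R: the recurrences themselves, plus row n1 (which row
   n1 - 1 needs) copied from row 0 by the shift identity. Ordered by 4 (l - k) plus a phase,
   these expressions compile to a straight-line program; a coefficient costs O(n) operations
   and a vector entry O(1), so there are O(n1 n^2) = O(n1^3 n2^2) operations in all. *)

section \<open>Shift invariance of the generalized reflection coefficients\<close>

lemma pvec_same: "pvec n R k k = evec k"
  and qvec_same: "qvec n R k k = evec k"
  by (simp_all add: pvec_def qvec_def)

lemma pvec_step:
  "k < l \<Longrightarrow> pvec n R k l i = pvec n R k (l - 1) i - acoef n R k l * qvec n R (Suc k) l i"
  and qvec_step:
  "k < l \<Longrightarrow> qvec n R k l i = qvec n R (Suc k) l i - acoef' n R k l * pvec n R k (l - 1) i"
proof -
  assume "k < l"
  then have d: "l - k = Suc (l - Suc k)" "l - 1 - k = l - Suc k" "Suc (k + (l - Suc k)) = l"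
    by simp_all
  show "pvec n R k l i = pvec n R k (l - 1) i - acoef n R k l * qvec n R (Suc k) l i"
    "qvec n R k l i = qvec n R (Suc k) l i - acoef' n R k l * pvec n R k (l - 1) i"
    by (simp_all add: pvec_def qvec_def acoef_def acoef'_def vcoef_def vcoef'_def d Let_def)
qed

lemma pq_support:
  assumes "i < k \<or> k + d < i"
  shows "fst (pq n R k d) i = 0 \<and> snd (pq n R k d) i = 0"
  using assms
proof (induction d arbitrary: k)
  case 0
  then show ?case by (auto simp: evec_def)
next
  case (Suc d)
  then show ?case
    using Suc.IH[of k] Suc.IH[of "Suc k"] by (auto simp: Let_def)
qed

definition shift_invariant :: "nat \<Rightarrow> nat \<Rightarrow> (nat \<Rightarrow> nat \<Rightarrow> complex) \<Rightarrow> bool" where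
  "shift_invariant n s R \<longleftrightarrow> (\<forall>i j. i + s < n \<longrightarrow> j + s < n \<longrightarrow> R (i + s) (j + s) = R i j)"

lemma bil_shiftU:
  assumes R: "shift_invariant n s R" and x: "\<And>i. n \<le> i + s \<Longrightarrow> x i = 0" and j: "j + s < n"
  shows "bil n R (shiftU n s x) (j + s) = bil n R x j"
proof -
  have "bil n R (shiftU n s x) (j + s) = (\<Sum>i\<in>{s..<n}. shiftU n s x i * R i (j + s))"
    unfolding bil_def by (rule sum.mono_neutral_right) (auto simp: shiftU_def)
  also have "\<dots> = (\<Sum>i<n - s. x i * R (i + s) (j + s))"
    using j by (intro sum.reindex_bij_witness[of _ "\<lambda>i. i + s" "\<lambda>i. i - s"]) (auto simp: shiftU_def)
  also have "\<dots> = (\<Sum>i<n - s. x i * R i j)"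
    using R j by (intro sum.cong) (auto simp: shift_invariant_def)
  also have "\<dots> = bil n R x j"
    unfolding bil_def by (rule sum.mono_neutral_left) (use x in auto)
  finally show ?thesis .
qed

lemma pq_shift:
  assumes R: "shift_invariant n s R"
  shows "k + s + d < n \<Longrightarrow>
    pq n R (k + s) d = (shiftU n s (fst (pq n R k d)), shiftU n s (snd (pq n R k d)))"
proof (induction d arbitrary: k)
  case 0
  then show ?case by (auto simp: evec_def shiftU_def fun_eq_iff)
next
  case (Suc d)
  let ?p = "fst (pq n R k d)" and ?q = "snd (pq n R (Suc k) d)"
  have IH: "fst (pq n R (k + s) d) = shiftU n s ?p" "snd (pq n R (Suc (k + s)) d) = shiftU n s ?q"
    using Suc.IH[of k] Suc.IH[of "Suc k"] Suc.prems by auto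
  have support: "?p i = 0" "?q i = 0" if "n \<le> i + s" for i
    using pq_support[where k=k and d=d and i=i] pq_support[where k="Suc k" and d=d and i=i]
      that Suc.prems by auto
  have bil_eq: "bil n R (shiftU n s ?p) (j + s) = bil n R ?p j"
    "bil n R (shiftU n s ?q) (j + s) = bil n R ?q j" if "j \<le> k + Suc d" for j
    using bil_shiftU[OF R] support that Suc.prems by auto
  show ?case
    using bil_eq[of "k + Suc d"] bil_eq[of k]
    by (simp add: IH Let_def algebra_simps) (auto simp: shiftU_def fun_eq_iff)
qed

lemma qvec_shift:
  assumes "shift_invariant n s R" "k \<le> l" "l + s < n"
  shows "qvec n R (k + s) (l + s) = shiftU n s (qvec n R k l)"
  using pq_shift[OF assms(1), of k "l - k"] assms(2,3) by (simp add: qvec_def)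

lemma vcoef_shift:
  assumes R: "shift_invariant n s R" and "k \<le> l" "l + s < n"
  shows "vcoef n R (k + s) (l + s) = vcoef n R k l"
proof -
  have "qvec n R k l i = 0" if "n \<le> i + s" for i
    using pq_support[where k=k and d="l - k" and i=i] that assms(2,3) by (simp add: qvec_def)
  then show ?thesis
    unfolding vcoef_def qvec_shift[OF assms] using bil_shiftU[OF R] assms(3) by simp
qed

lemma block_toeplitz_shift_invariant:
  assumes "block_toeplitz n1 n2 R"
  shows "shift_invariant (n1 * n2) (c * n1) R"
  unfolding shift_invariant_def
proof (intro allI impI)
  fix i j assume i: "i + c * n1 < n1 * n2" and j: "j + c * n1 < n1 * n2"
  obtain B :: "int \<Rightarrow> nat \<Rightarrow> nat \<Rightarrow> complex" where
    B: "\<And>a b i j. a < n2 \<Longrightarrow> b < n2 \<Longrightarrow> i < n1 \<Longrightarrow> j < n1 \<Longrightarrow>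
          R (a * n1 + i) (b * n1 + j) = B (int b - int a) i j"
    using assms unfolding block_toeplitz_def by blast
  have "0 < n1" using i by (cases n1) auto
  have block: "x div n1 + c < n2" "x mod n1 < n1" "x + c * n1 = (x div n1 + c) * n1 + x mod n1"
    if "x + c * n1 < n1 * n2" for x
  proof -
    have "(x div n1 + c) * n1 \<le> x + c * n1"
      by (simp add: algebra_simps)
    then have "(x div n1 + c) * n1 < n2 * n1"
      using that mult.commute[of n1 n2] by linarith
    then show "x div n1 + c < n2" by simp
    show "x mod n1 < n1" using \<open>0 < n1\<close> by simp
    show "x + c * n1 = (x div n1 + c) * n1 + x mod n1"
      by (simp add: algebra_simps)
  qed
  have "R (i + c * n1) (j + c * n1) =
      B (int (j div n1 + c) - int (i div n1 + c)) (i mod n1) (j mod n1)"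
    unfolding block(3)[OF i] block(3)[OF j] using block[OF i] block[OF j] by (intro B)
  also have "\<dots> = R (i div n1 * n1 + i mod n1) (j div n1 * n1 + j mod n1)"
    using block[OF i] block[OF j] by (subst B) auto
  also have "\<dots> = R i j"
    by simp
  finally show "R (i + c * n1) (j + c * n1) = R i j" .
qed

lemma qvec_vcoef_block_reduce:
  assumes R: "block_toeplitz n1 n2 R" and "k \<le> l" "l < n1 * n2"
  shows "(\<forall>i<n1 * n2. qvec (n1 * n2) R k l i =
            shiftU (n1 * n2) (sec k n1) (qvec (n1 * n2) R (k mod n1) (l - sec k n1)) i) \<and>
         vcoef (n1 * n2) R k l = vcoef (n1 * n2) R (k mod n1) (l - sec k n1)"
proof -
  have shift: "shift_invariant (n1 * n2) (sec k n1) R"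
    using block_toeplitz_shift_invariant[OF R, of "k div n1"] by (simp add: sec_def mult.commute)
  have k: "k = k mod n1 + sec k n1"
    by (simp add: sec_def)
  then have le: "k mod n1 \<le> l - sec k n1" and l: "l = l - sec k n1 + sec k n1"
    using assms(2) by linarith+
  have lt: "l - sec k n1 + sec k n1 < n1 * n2"
    using assms(2,3) l by linarith
  have "qvec (n1 * n2) R k l =
      shiftU (n1 * n2) (sec k n1) (qvec (n1 * n2) R (k mod n1) (l - sec k n1))"
    using qvec_shift[OF shift le lt] k l by simp
  moreover have "vcoef (n1 * n2) R k l = vcoef (n1 * n2) R (k mod n1) (l - sec k n1)"
    using vcoef_shift[OF shift le lt] k l by simp
  ultimately show ?thesis by simp
qed

section \<open>Straight-line programs evaluating expression schedules\<close>

lemma exec_append: "exec (P @ Q) m = exec Q (exec P m)"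
  by (induction P arbitrary: m) auto

lemma exec_extends: "\<exists>ys. exec P m = m @ ys"
  by (induction P arbitrary: m) (auto, metis append.assoc)

lemma length_exec: "length (exec P m) = length m + length P"
  by (induction P arbitrary: m) auto

lemma nth_concat_uniform:
  assumes "\<And>x. x \<in> set xs \<Longrightarrow> length (f x) = m" and "i < length xs" and "j < m"
  shows "concat (map f xs) ! (i * m + j) = f (xs ! i) ! j"
  using assms
proof (induction xs arbitrary: i)
  case Nil
  then show ?case by simp
next
  case (Cons x xs)
  then show ?case
    by (cases i) (auto simp: nth_append add.assoc)
qed

lemma length_input_of: "length (input_of n R) = n * n"
  by (simp add: input_of_def length_concat comp_def sum_list_triv)

lemma nth_input_of: "i < n \<Longrightarrow> j < n \<Longrightarrow> input_of n R ! (i * n + j) = R i j"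
  unfolding input_of_def by (subst nth_concat_uniform[where m = n]) auto

datatype binop = BAdd | BSub | BMul | BDiv

fun binop_instr :: "binop \<Rightarrow> nat \<Rightarrow> nat \<Rightarrow> instr" where
  "binop_instr BAdd = Add"
| "binop_instr BSub = Sub"
| "binop_instr BMul = Mul"
| "binop_instr BDiv = Dvd"

fun apply_binop :: "binop \<Rightarrow> complex \<Rightarrow> complex \<Rightarrow> complex" where
  "apply_binop BAdd = (+)"
| "apply_binop BSub = (-)"
| "apply_binop BMul = (*)"
| "apply_binop BDiv = (/)"

lemma step_binop_instr: "step (binop_instr b i j) m = apply_binop b (reg m i) (reg m j)"
  by (cases b) simp_all

datatype 'a expr = EVar 'a | EEntry nat nat | ELit complex | EBin binop "'a expr" "'a expr"

fun eval :: "('a \<Rightarrow> complex) \<Rightarrow> (nat \<Rightarrow> nat \<Rightarrow> complex) \<Rightarrow> 'a expr \<Rightarrow> complex" where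
  "eval val R (EVar x) = val x"
| "eval val R (EEntry i j) = R i j"
| "eval val R (ELit c) = c"
| "eval val R (EBin b e1 e2) = apply_binop b (eval val R e1) (eval val R e2)"

fun vars :: "'a expr \<Rightarrow> 'a set" where
  "vars (EVar x) = {x}"
| "vars (EBin b e1 e2) = vars e1 \<union> vars e2"
| "vars _ = {}"

fun entries :: "'a expr \<Rightarrow> (nat \<times> nat) set" where
  "entries (EEntry i j) = {(i, j)}"
| "entries (EBin b e1 e2) = entries e1 \<union> entries e2"
| "entries _ = {}"

fun cost :: "'a expr \<Rightarrow> nat" where
  "cost (ELit c) = 1"
| "cost (EBin b e1 e2) = cost e1 + cost e2 + 1"
| "cost _ = 0"

(* The code for e starts at register s; variables are read from the registers loc x and the
   entry R i j from register i * n + j. Returns the code and the register holding e. *)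
fun compile :: "nat \<Rightarrow> ('a \<Rightarrow> nat) \<Rightarrow> nat \<Rightarrow> 'a expr \<Rightarrow> instr list \<times> nat" where
  "compile n loc s (EVar x) = ([], loc x)"
| "compile n loc s (EEntry i j) = ([], i * n + j)"
| "compile n loc s (ELit c) = ([Const c], s)"
| "compile n loc s (EBin b e1 e2) =
     (let (c1, r1) = compile n loc s e1;
          (c2, r2) = compile n loc (s + length c1) e2
      in (c1 @ c2 @ [binop_instr b r1 r2], s + length c1 + length c2))"

lemma length_compile: "length (fst (compile n loc s e)) = cost e"
  by (induction e arbitrary: s) (simp_all add: case_prod_beta)

definition stores :: "nat \<Rightarrow> (nat \<Rightarrow> nat \<Rightarrow> complex) \<Rightarrow> ('a \<Rightarrow> complex) \<Rightarrow> ('a \<Rightarrow> nat)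
    \<Rightarrow> 'a set \<Rightarrow> complex list \<Rightarrow> bool" where
  "stores n R val loc D M \<longleftrightarrow>
     (\<forall>i<n. \<forall>j<n. i * n + j < length M \<and> M ! (i * n + j) = R i j) \<and>
     (\<forall>x\<in>D. loc x < length M \<and> M ! loc x = val x)"

lemma stores_append: "stores n R val loc D M \<Longrightarrow> stores n R val loc D (M @ ys)"
  by (fastforce simp: stores_def nth_append)

lemma stores_exec: "stores n R val loc D M \<Longrightarrow> stores n R val loc D (exec P M)"
  using exec_extends[of P M] stores_append by metis

lemma compile_correct:
  assumes "stores n R val loc D M" "vars e \<subseteq> D" "entries e \<subseteq> {..<n} \<times> {..<n}"
    and "compile n loc (length M) e = (c, r)"
  shows "r < length (exec c M) \<and> exec c M ! r = eval val R e"
  using assms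
proof (induction e arbitrary: M c r)
  case (EBin b e1 e2)
  obtain c1 r1 where 1: "compile n loc (length M) e1 = (c1, r1)" by fastforce
  define M1 where "M1 = exec c1 M"
  obtain c2 r2 where 2: "compile n loc (length M1) e2 = (c2, r2)" by fastforce
  define M2 where "M2 = exec c2 M1"
  have c: "c = c1 @ c2 @ [binop_instr b r1 r2]" and r: "r = length M2"
    using EBin.prems(4) 1 2 by (auto simp: M1_def M2_def length_exec)
  have v1: "r1 < length M1 \<and> M1 ! r1 = eval val R e1"
    using EBin.IH(1)[OF EBin.prems(1) _ _ 1] EBin.prems(2,3) by (simp add: M1_def)
  have v2: "r2 < length M2 \<and> M2 ! r2 = eval val R e2"
    using EBin.IH(2)[OF stores_exec[OF EBin.prems(1)] _ _ 2[unfolded M1_def]] EBin.prems(2,3)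
    by (simp add: M1_def M2_def)
  have "r1 < length M2 \<and> M2 ! r1 = eval val R e1"
    using v1 exec_extends[of c2 M1] by (auto simp: M2_def nth_append)
  then have "exec c M = M2 @ [apply_binop b (eval val R e1) (eval val R e2)]"
    using v2 by (simp add: c exec_append step_binop_instr reg_def M1_def M2_def)
  then show ?case by (simp add: r)
qed (auto simp: stores_def)

lemma stores_input_of:
  "stores n R val loc {} (input_of n R)"
proof -
  have "i * n + j < n * n" if "i < n" "j < n" for i j
  proof -
    have "i * n + j < Suc i * n" using that by simp
    also have "\<dots> \<le> n * n" using that by (intro mult_le_mono1) simp
    finally show ?thesis .
  qed
  then show ?thesis by (simp add: stores_def length_input_of nth_input_of)
qed

fun schedule_step ::
  "nat \<Rightarrow> instr list \<times> ('a \<Rightarrow> nat) \<Rightarrow> 'a \<times> 'a expr \<Rightarrow> instr list \<times> ('a \<Rightarrow> nat)"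
where
  "schedule_step n (P, loc) (x, e) =
     (let (c, r) = compile n loc (n * n + length P) e in (P @ c, loc(x := r)))"

definition build :: "nat \<Rightarrow> ('a \<times> 'a expr) list \<Rightarrow> instr list \<times> ('a \<Rightarrow> nat)" where
  "build n xs = foldl (schedule_step n) ([], \<lambda>_. 0) xs"

lemma build_snoc: "build n (xs @ [(x, e)]) = schedule_step n (build n xs) (x, e)"
  by (simp add: build_def)

lemma length_build: "length (fst (build n xs)) = (\<Sum>(x, e)\<leftarrow>xs. cost e)"
proof (induction xs rule: rev_induct)
  case (snoc xe xs)
  then show ?case
    using length_compile
    by (cases xe, cases "build n xs") (simp add: build_snoc case_prod_beta)
qed (simp add: build_def)

inductive valid_schedule :: "nat \<Rightarrow> ('a \<times> 'a expr) list \<Rightarrow> bool" for n where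
  Nil: "valid_schedule n []"
| snoc: "valid_schedule n xs \<Longrightarrow> vars e \<subseteq> fst ` set xs \<Longrightarrow> entries e \<subseteq> {..<n} \<times> {..<n}
          \<Longrightarrow> valid_schedule n (xs @ [(x, e)])"

lemma build_correct:
  assumes "valid_schedule n xs" and "\<forall>(x, e)\<in>set xs. eval val R e = val x"
  shows "stores n R val (snd (build n xs)) (fst ` set xs) (exec (fst (build n xs)) (input_of n R))"
  using assms
proof (induction rule: valid_schedule.induct)
  case Nil
  then show ?case by (simp add: build_def stores_input_of)
next
  case (snoc xs e x)
  obtain P loc where b: "build n xs = (P, loc)" by fastforce
  define M where "M = exec P (input_of n R)"
  obtain c r where c: "compile n loc (length M) e = (c, r)" by fastforce
  have M: "stores n R val loc (fst ` set xs) M"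
    using snoc by (simp add: b M_def)
  have r: "r < length (exec c M) \<and> exec c M ! r = val x"
    using compile_correct[OF M snoc.hyps(2,3) c] snoc.prems by simp
  have b': "build n (xs @ [(x, e)]) = (P @ c, loc(x := r))"
    using c by (simp add: build_snoc b M_def length_exec length_input_of)
  have "stores n R val (loc(x := r)) (fst ` set (xs @ [(x, e)])) (exec (P @ c) (input_of n R))"
    using stores_exec[OF M, of c] r by (auto simp: stores_def M_def exec_append)
  then show ?case by (simp only: b' fst_conv snd_conv)
qed

lemma valid_schedule_append:
  assumes "valid_schedule n xs"
    and "\<And>x e. (x, e) \<in> set ys \<Longrightarrow> vars e \<subseteq> fst ` set xs \<and> entries e \<subseteq> {..<n} \<times> {..<n}"
  shows "valid_schedule n (xs @ ys)"
  using assms(2)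
proof (induction ys rule: rev_induct)
  case (snoc xe ys)
  obtain x e where xe: "xe = (x, e)" by fastforce
  have "vars e \<subseteq> fst ` set (xs @ ys)" "entries e \<subseteq> {..<n} \<times> {..<n}"
    using snoc.prems[of x e] by (auto simp: xe)
  moreover have "valid_schedule n (xs @ ys)"
    by (rule snoc.IH) (use snoc.prems in auto)
  ultimately have "valid_schedule n ((xs @ ys) @ [(x, e)])"
    by (intro valid_schedule.snoc)
  then show ?case by (simp add: xe)
qed (simp add: assms(1))

lemma valid_schedule_layers:
  assumes "\<And>s x e. s < N \<Longrightarrow> (x, e) \<in> set (L s) \<Longrightarrow>
      vars e \<subseteq> (\<Union>s'<s. fst ` set (L s')) \<and> entries e \<subseteq> {..<n} \<times> {..<n}"
  shows "valid_schedule n (concat (map L [0..<N]))"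
  using assms
proof (induction N)
  case 0
  then show ?case by (simp add: valid_schedule.Nil)
next
  case (Suc N)
  have labels: "fst ` set (concat (map L [0..<N])) = (\<Union>s'<N. fst ` set (L s'))"
    by (simp add: image_UN atLeast0LessThan)
  have "valid_schedule n (concat (map L [0..<N]))"
  proof (rule Suc.IH)
    fix s x e assume "s < N" "(x, e) \<in> set (L s)"
    then show "vars e \<subseteq> (\<Union>s'<s. fst ` set (L s')) \<and> entries e \<subseteq> {..<n} \<times> {..<n}"
      by (intro Suc.prems) simp_all
  qed
  then have "valid_schedule n (concat (map L [0..<N]) @ L N)"
  proof (rule valid_schedule_append)
    fix x e assume "(x, e) \<in> set (L N)"
    then show "vars e \<subseteq> fst ` set (concat (map L [0..<N])) \<and> entries e \<subseteq> {..<n} \<times> {..<n}"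
      unfolding labels by (intro Suc.prems) simp_all
  qed
  then show ?case by simp
qed

section \<open>The schedule for block Toeplitz matrices\<close>

fun dot :: "nat \<Rightarrow> (nat \<Rightarrow> 'a) \<Rightarrow> nat \<Rightarrow> 'a expr" where
  "dot 0 x j = ELit 0"
| "dot (Suc m) x j = EBin BAdd (dot m x j) (EBin BMul (EVar (x m)) (EEntry m j))"

lemma eval_dot: "eval val R (dot m x j) = (\<Sum>i<m. val (x i) * R i j)"
  by (induction m) simp_all

lemma vars_dot: "vars (dot m x j) = x ` {..<m}"
  by (induction m) (auto simp: lessThan_Suc)

lemma entries_dot: "entries (dot m x j) = (\<lambda>i. (i, j)) ` {..<m}"
  by (induction m) (auto simp: lessThan_Suc)

lemma cost_dot: "cost (dot m x j) = 2 * m + 1"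
  by (induction m) simp_all

fun in_scope :: "nat \<Rightarrow> nat \<Rightarrow> quantity \<Rightarrow> bool" where
  "in_scope n1 n (QA k l) \<longleftrightarrow> k < n1 \<and> k < l \<and> l < n"
| "in_scope n1 n (QA' k l) \<longleftrightarrow> k < n1 \<and> k < l \<and> l < n"
| "in_scope n1 n (QP k l i) \<longleftrightarrow> k < n1 \<and> k \<le> l \<and> l < n \<and> i < n"
| "in_scope n1 n (QQ k l i) \<longleftrightarrow> k \<le> n1 \<and> k \<le> l \<and> l < n \<and> i < n"
| "in_scope n1 n (QV k l) \<longleftrightarrow> k \<le> n1 \<and> k \<le> l \<and> l < n"
| "in_scope n1 n (QV' k l) \<longleftrightarrow> k < n1 \<and> k \<le> l \<and> l < n"

fun level :: "quantity \<Rightarrow> nat" where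
  "level (QA k l) = l - k"
| "level (QA' k l) = l - k"
| "level (QP k l i) = l - k"
| "level (QQ k l i) = l - k"
| "level (QV k l) = l - k"
| "level (QV' k l) = l - k"

fun phase :: "nat \<Rightarrow> quantity \<Rightarrow> nat" where
  "phase n1 (QA k l) = 0"
| "phase n1 (QA' k l) = 0"
| "phase n1 (QP k l i) = 1"
| "phase n1 (QQ k l i) = (if k < n1 then 1 else 3)"
| "phase n1 (QV k l) = (if k < n1 then 2 else 3)"
| "phase n1 (QV' k l) = 2"

definition rank :: "nat \<Rightarrow> quantity \<Rightarrow> nat" where
  "rank n1 x = 4 * level x + phase n1 x"

lemma phase_less: "phase n1 x < 4"
  by (cases x) simp_all

lemma rank_div_mod: "rank n1 x div 4 = level x" "rank n1 x mod 4 = phase n1 x"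
  using phase_less[of n1 x] by (simp_all add: rank_def)

fun formula :: "nat \<Rightarrow> nat \<Rightarrow> quantity \<Rightarrow> quantity expr" where
  "formula n1 n (QA k l) = EBin BDiv (dot n (QP k (l - 1)) l) (EVar (QV (Suc k) l))"
| "formula n1 n (QA' k l) = EBin BDiv (dot n (QQ (Suc k) l) k) (EVar (QV' k (l - 1)))"
| "formula n1 n (QP k l i) =
     (if k = l then ELit (evec k i)
      else EBin BSub (EVar (QP k (l - 1) i)) (EBin BMul (EVar (QA k l)) (EVar (QQ (Suc k) l i))))"
| "formula n1 n (QQ k l i) =
     (if k = n1 then (if i < n1 then ELit 0 else EVar (QQ 0 (l - n1) (i - n1)))
      else if k = l then ELit (evec k i)
      else EBin BSub (EVar (QQ (Suc k) l i)) (EBin BMul (EVar (QA' k l)) (EVar (QP k (l - 1) i))))"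
| "formula n1 n (QV k l) = (if k = n1 then EVar (QV 0 (l - n1)) else dot n (QQ k l) l)"
| "formula n1 n (QV' k l) = dot n (QP k l) k"

definition stage_labels :: "nat \<Rightarrow> nat \<Rightarrow> nat \<Rightarrow> quantity list" where
  "stage_labels n1 n s =
     (let d = s div 4; ks = [0..<min n1 (n - d)] in
      if s mod 4 = 0 then
        (if d = 0 then [] else map (\<lambda>k. QA k (k + d)) ks @ map (\<lambda>k. QA' k (k + d)) ks)
      else if s mod 4 = 1 then
        concat (map (\<lambda>k. map (QP k (k + d)) [0..<n]) ks) @
        concat (map (\<lambda>k. map (QQ k (k + d)) [0..<n]) ks)
      else if s mod 4 = 2 then
        map (\<lambda>k. QV k (k + d)) ks @ map (\<lambda>k. QV' k (k + d)) ks
      else if n1 + d < n then map (QQ n1 (n1 + d)) [0..<n] @ [QV n1 (n1 + d)]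
      else [])"

definition schedule :: "nat \<Rightarrow> nat \<Rightarrow> (quantity \<times> quantity expr) list" where
  "schedule n1 n =
     concat (map (\<lambda>s. map (\<lambda>x. (x, formula n1 n x)) (stage_labels n1 n s)) [0..<4 * n])"

lemma set_stage_labels: "set (stage_labels n1 n s) = {x. in_scope n1 n x \<and> rank n1 x = s}"
proof (intro set_eqI iffI)
  have s: "s = 4 * (s div 4) + s mod 4" and "s mod 4 < 4"
    by simp_all
  then have "s mod 4 = 0 \<or> s mod 4 = 1 \<or> s mod 4 = 2 \<or> s mod 4 = 3"
    by linarith
  moreover fix x assume "x \<in> set (stage_labels n1 n s)"
  ultimately show "x \<in> {x. in_scope n1 n x \<and> rank n1 x = s}"
    unfolding stage_labels_def Let_def rank_def
    by (auto split: if_splits) (use s in linarith)+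
next
  fix x assume "x \<in> {x. in_scope n1 n x \<and> rank n1 x = s}"
  then have "in_scope n1 n x" and s: "s = rank n1 x" by simp_all
  then show "x \<in> set (stage_labels n1 n s)"
    unfolding stage_labels_def Let_def s rank_div_mod
    by (cases x) (auto simp: image_iff)
qed

lemma formula_vars:
  assumes "1 \<le> n1" "in_scope n1 n x" "y \<in> vars (formula n1 n x)"
  shows "in_scope n1 n y \<and> rank n1 y < rank n1 x"
  using assms by (cases x) (auto simp: vars_dot rank_def split: if_splits)

lemma formula_entries: "in_scope n1 n x \<Longrightarrow> entries (formula n1 n x) \<subseteq> {..<n} \<times> {..<n}"
  by (cases x) (auto simp: entries_dot)

lemma rank_less: "in_scope n1 n x \<Longrightarrow> rank n1 x < 4 * n"
  using phase_less[of n1 x] by (cases x) (auto simp: rank_def)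

lemma labels_schedule: "fst ` set (schedule n1 n) = {x. in_scope n1 n x}"
proof -
  have "fst ` set (schedule n1 n) = (\<Union>s<4 * n. set (stage_labels n1 n s))"
    by (simp add: schedule_def image_UN image_image atLeast0LessThan)
  also have "\<dots> = {x. in_scope n1 n x}"
    using rank_less by (auto simp: set_stage_labels)
  finally show ?thesis .
qed

lemma valid_schedule_schedule:
  assumes "1 \<le> n1"
  shows "valid_schedule n (schedule n1 n)"
  unfolding schedule_def
proof (rule valid_schedule_layers)
  fix s x e
  assume "(x, e) \<in> set (map (\<lambda>x. (x, formula n1 n x)) (stage_labels n1 n s))"
  then have x: "in_scope n1 n x" "rank n1 x = s" and e: "e = formula n1 n x"
    by (auto simp: set_stage_labels)
  have "vars e \<subseteq> (\<Union>s'<s. set (stage_labels n1 n s'))"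
    using formula_vars[OF assms x(1)] x(2) by (auto simp: e set_stage_labels)
  then show "vars e \<subseteq> (\<Union>s'<s. fst ` set (map (\<lambda>x. (x, formula n1 n x)) (stage_labels n1 n s'))) \<and>
      entries e \<subseteq> {..<n} \<times> {..<n}"
    using formula_entries[OF x(1)] by (simp add: e image_image)
qed

lemma formula_eval:
  assumes R: "block_toeplitz n1 n2 R" and n1: "1 \<le> n1" and x: "in_scope n1 (n1 * n2) x"
  shows "eval (qval (n1 * n2) R) R (formula n1 (n1 * n2) x) = qval (n1 * n2) R x"
proof -
  let ?n = "n1 * n2"
  have shift: "shift_invariant ?n (1 * n1) R"
    by (rule block_toeplitz_shift_invariant[OF R])
  have row_n1: "qvec ?n R n1 l = shiftU ?n n1 (qvec ?n R 0 (l - n1))"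
    "vcoef ?n R n1 l = vcoef ?n R 0 (l - n1)" if "n1 \<le> l" "l < ?n" for l
    using qvec_shift[OF shift, of 0 "l - n1"] vcoef_shift[OF shift, of 0 "l - n1"] that
    by simp_all
  show ?thesis
    using x row_n1
    by (cases x)
      (auto simp: eval_dot bil_def acoef_def acoef'_def vcoef_def vcoef'_def shiftU_def
        pvec_same qvec_same pvec_step qvec_step)
qed

lemma sum_list_le_length_mult:
  fixes f :: "'a \<Rightarrow> nat"
  assumes "\<And>x. x \<in> set xs \<Longrightarrow> f x \<le> c"
  shows "(\<Sum>x\<leftarrow>xs. f x) \<le> length xs * c"
  using assms by (induction xs) (auto intro: add_mono)

lemma sum_list_map_concat: "(\<Sum>x\<leftarrow>concat xss. f x) = (\<Sum>xs\<leftarrow>xss. \<Sum>x\<leftarrow>xs. f x)"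
  by (induction xss) simp_all

lemma cost_stage_labels:
  assumes "1 \<le> n1"
  shows "(\<Sum>x\<leftarrow>stage_labels n1 n s. cost (formula n1 n x)) \<le> 4 * n1 * (n + 1)"
proof -
  let ?f = "\<lambda>x. cost (formula n1 n x)"
  define d where "d = s div 4"
  define ks where "ks = [0..<min n1 (n - d)]"
  have ks: "length ks \<le> n1"
    by (simp add: ks_def)
  have scalars: "(\<Sum>x\<leftarrow>map g ks. ?f x) \<le> n1 * (2 * n + 2)"
    if "\<And>k. ?f (g k) \<le> 2 * n + 2" for g
  proof -
    have "(\<Sum>x\<leftarrow>map g ks. ?f x) \<le> length ks * (2 * n + 2)"
      using sum_list_le_length_mult[of "map g ks" ?f "2 * n + 2"] that by auto
    also have "\<dots> \<le> n1 * (2 * n + 2)"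
      using ks by (rule mult_le_mono1)
    finally show ?thesis .
  qed
  have vectors: "(\<Sum>x\<leftarrow>concat (map (\<lambda>k. map (g k) [0..<n]) ks). ?f x) \<le> n1 * n * 2"
    if "\<And>k i. ?f (g k i) \<le> 2" for g
  proof -
    have "(\<Sum>x\<leftarrow>concat (map (\<lambda>k. map (g k) [0..<n]) ks). ?f x) \<le> length ks * n * 2"
      using that sum_list_le_length_mult[of "concat (map (\<lambda>k. map (g k) [0..<n]) ks)" ?f 2]
      by (auto simp: length_concat comp_def sum_list_triv)
    also have "\<dots> \<le> n1 * n * 2"
      using ks by simp
    finally show ?thesis .
  qed
  have "?f x \<le> 1" if "x \<in> set (map (QQ n1 (n1 + d)) [0..<n])" for x
    using that by auto
  then have copy: "(\<Sum>x\<leftarrow>map (QQ n1 (n1 + d)) [0..<n] @ [QV n1 (n1 + d)]. ?f x) \<le> n"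
    using sum_list_le_length_mult[of "map (QQ n1 (n1 + d)) [0..<n]" ?f 1] by simp
  have cost_scalar: "?f (QA k l) \<le> 2 * n + 2" "?f (QA' k l) \<le> 2 * n + 2"
    "?f (QV k l) \<le> 2 * n + 2" "?f (QV' k l) \<le> 2 * n + 2" for k l
    by (simp_all add: cost_dot)
  have cost_vector: "?f (QP k l i) \<le> 2" "?f (QQ k l i) \<le> 2" for k l i
    by simp_all
  have "n \<le> n1 * (n + 1)"
    using assms by (metis le_add1 mult_1 mult_le_mono1 order_trans)
  then show ?thesis
    unfolding stage_labels_def Let_def d_def[symmetric] ks_def[symmetric]
    using scalars[of "\<lambda>k. QA k (k + d)", OF cost_scalar(1)]
      scalars[of "\<lambda>k. QA' k (k + d)", OF cost_scalar(2)]
      scalars[of "\<lambda>k. QV k (k + d)", OF cost_scalar(3)]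
      scalars[of "\<lambda>k. QV' k (k + d)", OF cost_scalar(4)]
      vectors[of "\<lambda>k. QP k (k + d)", OF cost_vector(1)]
      vectors[of "\<lambda>k. QQ k (k + d)", OF cost_vector(2)] copy
    by (auto simp: algebra_simps)
qed

lemma cost_schedule:
  assumes "1 \<le> n1"
  shows "(\<Sum>(x, e)\<leftarrow>schedule n1 n. cost e) \<le> 32 * n1 * n\<^sup>2"
proof -
  have "(\<Sum>(x, e)\<leftarrow>schedule n1 n. cost e) =
      (\<Sum>s\<leftarrow>[0..<4 * n]. \<Sum>x\<leftarrow>stage_labels n1 n s. cost (formula n1 n x))"
    by (simp add: schedule_def sum_list_map_concat case_prod_beta comp_def)
  also have "\<dots> \<le> 4 * n * (4 * n1 * (n + 1))"
    using sum_list_le_length_mult cost_stage_labels[OF assms]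
    by (metis length_upt minus_nat.diff_0)
  also have "\<dots> = 16 * n1 * (n * (n + 1))"
    by (simp add: algebra_simps)
  also have "\<dots> \<le> 16 * n1 * (n * (2 * n))"
    using mult_le_mono2[of "n + 1" "2 * n" n] by (cases "n = 0") simp_all
  also have "\<dots> = 32 * n1 * n\<^sup>2"
    by (simp add: power2_eq_square)
  finally show ?thesis .
qed

lemma required_in_scope: "x \<in> required n1 n \<Longrightarrow> in_scope n1 n x"
  by (auto simp: required_def)

lemma schedule_correct:
  assumes R: "block_toeplitz n1 n2 R" and n1: "1 \<le> n1" and x: "x \<in> required n1 (n1 * n2)"
    and P: "build (n1 * n2) (schedule n1 (n1 * n2)) = (P, loc)"
  shows "loc x < length (exec P (input_of (n1 * n2) R)) \<and>
    exec P (input_of (n1 * n2) R) ! loc x = qval (n1 * n2) R x"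
proof -
  let ?n = "n1 * n2"
  have "\<forall>(y, e)\<in>set (schedule n1 ?n). eval (qval ?n R) R e = qval ?n R y"
    using formula_eval[OF R n1] by (auto simp: schedule_def set_stage_labels)
  then have "stores ?n R (qval ?n R) loc {y. in_scope n1 ?n y} (exec P (input_of ?n R))"
    using build_correct[OF valid_schedule_schedule[OF n1]] P labels_schedule by fastforce
  then show ?thesis
    using required_in_scope[OF x] by (simp add: stores_def)
qed

lemma reflection_coefficient_program:
  assumes n1: "1 \<le> n1"
  shows "\<exists>(P :: instr list) (out :: quantity \<Rightarrow> nat).
    length P \<le> 32 * n1 ^ 3 * n2 ^ 2 \<and>
    (\<forall>R. block_toeplitz n1 n2 R \<longrightarrow>
       (\<forall>x \<in> required n1 (n1 * n2).
          out x < length (exec P (input_of (n1 * n2) R)) \<and>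
          exec P (input_of (n1 * n2) R) ! out x = qval (n1 * n2) R x))"
proof -
  obtain P loc where P: "build (n1 * n2) (schedule n1 (n1 * n2)) = (P, loc)"
    by fastforce
  have "length P \<le> 32 * n1 * (n1 * n2)\<^sup>2"
    using length_build[of "n1 * n2" "schedule n1 (n1 * n2)"] cost_schedule[OF n1] P by simp
  also have "\<dots> = 32 * n1 ^ 3 * n2 ^ 2"
    by (simp add: power_mult_distrib power2_eq_square power3_eq_cube)
  finally show ?thesis
    using schedule_correct[OF _ n1 _ P] by blast
qed

theorem theorem2:
  "\<exists>C::nat. \<forall>n1 n2. 1 \<le> n1 \<longrightarrow> 1 \<le> n2 \<longrightarrow>
     (let n = n1 * n2 in
      (\<forall>R. block_toeplitz n1 n2 R \<longrightarrow> posdef_mat n R \<longrightarrow>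
         (\<forall>k l. k \<le> l \<longrightarrow> l < n \<longrightarrow>
            (\<forall>i<n. qvec n R k l i =
                    shiftU n (sec k n1) (qvec n R (k mod n1) (l - sec k n1)) i) \<and>
            vcoef n R k l = vcoef n R (k mod n1) (l - sec k n1))) \<and>
      (\<exists>(P :: instr list) (out :: quantity \<Rightarrow> nat).
         length P \<le> C * n1 ^ 3 * n2 ^ 2 \<and>
         (\<forall>R. block_toeplitz n1 n2 R \<longrightarrow> posdef_mat n R \<longrightarrow>
            (\<forall>x \<in> required n1 n.
               out x < length (exec P (input_of n R)) \<and>
               exec P (input_of n R) ! out x = qval n R x))))"
  unfolding Let_def
proof (intro exI[of _ 32] allI impI conjI)
  fix n1 n2 :: nat
  assume "1 \<le> n1"
  then show "\<exists>P out. length P \<le> 32 * n1 ^ 3 * n2 ^ 2 \<and>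
    (\<forall>R. block_toeplitz n1 n2 R \<longrightarrow> posdef_mat (n1 * n2) R \<longrightarrow>
       (\<forall>x \<in> required n1 (n1 * n2).
          out x < length (exec P (input_of (n1 * n2) R)) \<and>
          exec P (input_of (n1 * n2) R) ! out x = qval (n1 * n2) R x))"
    using reflection_coefficient_program[of n1 n2] by meson
qed (simp_all add: qvec_vcoef_block_reduce)

end
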